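(* Let $l\in\mathbb{N}$ and for each $i\in\{1,\dots,l\}$ let $S_i$ be a countable adequate commutative partial semigroup and let $\langle y_{i,n}\rangle_{n=1}^{\infty}$ be an adequate sequence in $S_i$. Let $C$ be an $IP^{\star}$ set in $T=S_1\times\cdots\times S_l$ and let $m\in\mathbb{N}$. Then for each $i\in\{1,\dots,l\}$ there is a weak product subsystem $\langle x_{i,n}\rangle_{n=1}^{m}$ of $\langle y_{i,n}\rangle_{n=1}^{\infty}$ such that \[ FS(\langle x_{1,n}\rangle_{n=1}^{m})\times\cdots\times FS(\langle x_{l,n}\rangle_{n=1}^{m})\subseteq C . \]
   Context: A partial semigroup $(S,+)$ is a set with a map $+$ from a subset of $S\times S$ to $S$ such that $(a+b)+c=a+(b+c)$ whenever either side is defined (then both are defined and equal); it is commutative if $a+b$ is defined iff $b+a$ is, and then they are equal. For $s\in S$, $\varphi(s)=\{t: s+t\text{ defined}\}$; for finite nonempty $H\subseteq S$, $\sigma(H)=\bigcap_{s\in H}\varphi(s)$; $S$ is adequate if all $\sigma(H)\ne\emptyset$. On $T=S_1\times\cdots\times S_l$, $\bar a+\bar b$ is defined iff $a_i+b_i$ is defined for every $i$, and then equals $(a_1+b_1,\dots,a_l+b_l)$. For a partial semigroup $S$: $\beta S$ is the space of ultrafilters on $S$; $\delta S=\{p\in\beta S:\varphi(x)\in p \text{ for all } x\in S\}$; for $p,q\in\delta S$, $A\in p+q$ iff $\{x\in S: -x+A\in q\}\in p$, where $-x+A=\{y\in\varphi(x): x+y\in A\}$; this makes $\delta S$ a semigroup.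 A set $C\subseteq S$ is $IP^{\star}$ if $C\in p$ for every idempotent $p=p+p$ in $\delta S$. A sequence $\langle y_n\rangle_{n=1}^\infty$ is adequate if all finite sums $\sum_{n\in F}y_n$ are defined and for every finite nonempty $H\subseteq S$ there is $m$ with all sums $\sum_{n\in F}y_n$, $F\subseteq\{m,m+1,\dots\}$ finite nonempty, lying in $\sigma(H)$. $\langle x_n\rangle_{n=1}^{m}$ is a weak product subsystem of $\langle y_n\rangle_{n=1}^{\infty}$ if there are pairwise disjoint finite nonempty $H_1,\dots,H_m\subseteq\mathbb{N}$ with $x_n=\sum_{t\in H_n}y_t$ for each $n$. $FS(\langle x_n\rangle_{n=1}^{m})=\{\sum_{n\in F}x_n: \emptyset\ne F\subseteq\{1,\dots,m\}\}$. *)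

theory Defs
  imports Main "HOL-Library.FuncSet" "HOL-Library.Countable_Set"
begin

definition partial_semigroup :: "'a set \<Rightarrow> ('a \<Rightarrow> 'a \<Rightarrow> 'a option) \<Rightarrow> bool" where
  "partial_semigroup S add \<longleftrightarrow>
     (\<forall>a\<in>S. \<forall>b\<in>S. \<forall>c. add a b = Some c \<longrightarrow> c \<in> S) \<and>
     (\<forall>a\<in>S. \<forall>b\<in>S. \<forall>c\<in>S.
        Option.bind (add a b) (\<lambda>d. add d c) = Option.bind (add b c) (\<lambda>e. add a e))"

definition comm_partial_semigroup :: "'a set \<Rightarrow> ('a \<Rightarrow> 'a \<Rightarrow> 'a option) \<Rightarrow> bool" where
  "comm_partial_semigroup S add \<longleftrightarrow>
     partial_semigroup S add \<and> (\<forall>a\<in>S. \<forall>b\<in>S. add a b = add b a)"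

definition phi :: "'a set \<Rightarrow> ('a \<Rightarrow> 'a \<Rightarrow> 'a option) \<Rightarrow> 'a \<Rightarrow> 'a set" where
  "phi S add s = {t \<in> S. add s t \<noteq> None}"

definition sigma :: "'a set \<Rightarrow> ('a \<Rightarrow> 'a \<Rightarrow> 'a option) \<Rightarrow> 'a set \<Rightarrow> 'a set" where
  "sigma S add H = (\<Inter>s\<in>H. phi S add s)"

definition adequate :: "'a set \<Rightarrow> ('a \<Rightarrow> 'a \<Rightarrow> 'a option) \<Rightarrow> bool" where
  "adequate S add \<longleftrightarrow>
     (\<forall>H. finite H \<and> H \<noteq> {} \<and> H \<subseteq> S \<longrightarrow> sigma S add H \<noteq> {})"

definition prod_carrier :: "'i set \<Rightarrow> ('i \<Rightarrow> 'a set) \<Rightarrow> ('i \<Rightarrow> 'a) set" where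
  "prod_carrier I S = PiE I S"

definition prod_add :: "'i set \<Rightarrow> ('i \<Rightarrow> 'a \<Rightarrow> 'a \<Rightarrow> 'a option)
                        \<Rightarrow> ('i \<Rightarrow> 'a) \<Rightarrow> ('i \<Rightarrow> 'a) \<Rightarrow> ('i \<Rightarrow> 'a) option" where
  "prod_add I add x y =
     (if \<forall>i\<in>I. add i (x i) (y i) \<noteq> None
      then Some (\<lambda>i. if i \<in> I then the (add i (x i) (y i)) else undefined)
      else None)"

definition ultrafilter_on :: "'a set \<Rightarrow> 'a set set \<Rightarrow> bool" where
  "ultrafilter_on S p \<longleftrightarrow>
     p \<subseteq> Pow S \<and> S \<in> p \<and> {} \<notin> p \<and>
     (\<forall>A\<in>p. \<forall>B\<in>p. A \<inter> B \<in> p) \<and>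
     (\<forall>A\<in>p. \<forall>B. A \<subseteq> B \<and> B \<subseteq> S \<longrightarrow> B \<in> p) \<and>
     (\<forall>A. A \<subseteq> S \<longrightarrow> A \<in> p \<or> S - A \<in> p)"

definition deltaS :: "'a set \<Rightarrow> ('a \<Rightarrow> 'a \<Rightarrow> 'a option) \<Rightarrow> 'a set set set" where
  "deltaS S add = {p. ultrafilter_on S p \<and> (\<forall>x\<in>S. phi S add x \<in> p)}"

definition minus_shift :: "'a set \<Rightarrow> ('a \<Rightarrow> 'a \<Rightarrow> 'a option) \<Rightarrow> 'a \<Rightarrow> 'a set \<Rightarrow> 'a set" where
  "minus_shift S add x A = {y \<in> phi S add x. \<exists>z\<in>A. add x y = Some z}"

definition uf_plus :: "'a set \<Rightarrow> ('a \<Rightarrow> 'a \<Rightarrow> 'a option) \<Rightarrow> 'a set set \<Rightarrow> 'a set set \<Rightarrow> 'a set set" where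
  "uf_plus S add p q = {A. A \<subseteq> S \<and> {x \<in> S. minus_shift S add x A \<in> q} \<in> p}"

definition IP_star :: "'a set \<Rightarrow> ('a \<Rightarrow> 'a \<Rightarrow> 'a option) \<Rightarrow> 'a set \<Rightarrow> bool" where
  "IP_star S add C \<longleftrightarrow> C \<subseteq> S \<and>
     (\<forall>p\<in>deltaS S add. uf_plus S add p p = p \<longrightarrow> C \<in> p)"

text \<open>Finite sums \<open>\<Sum>n\<in>F. y n\<close> of a sequence, summed in increasing order of indices
  (None if undefined or F empty/infinite).\<close>

fun psum_list :: "('a \<Rightarrow> 'a \<Rightarrow> 'a option) \<Rightarrow> (nat \<Rightarrow> 'a) \<Rightarrow> nat list \<Rightarrow> 'a option" where
  "psum_list add y [] = None"
| "psum_list add y [n] = Some (y n)"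
| "psum_list add y (n # ns) = Option.bind (psum_list add y ns) (\<lambda>s. add (y n) s)"

definition psum :: "('a \<Rightarrow> 'a \<Rightarrow> 'a option) \<Rightarrow> (nat \<Rightarrow> 'a) \<Rightarrow> nat set \<Rightarrow> 'a option" where
  "psum add y F = (if finite F then psum_list add y (sorted_list_of_set F) else None)"

definition adequate_seq :: "'a set \<Rightarrow> ('a \<Rightarrow> 'a \<Rightarrow> 'a option) \<Rightarrow> (nat \<Rightarrow> 'a) \<Rightarrow> bool" where
  "adequate_seq S add y \<longleftrightarrow>
     (\<forall>n. y n \<in> S) \<and>
     (\<forall>F. finite F \<and> F \<noteq> {} \<longrightarrow> psum add y F \<noteq> None) \<and>
     (\<forall>H. finite H \<and> H \<noteq> {} \<and> H \<subseteq> S \<longrightarrow>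
        (\<exists>m. \<forall>F. finite F \<and> F \<noteq> {} \<and> F \<subseteq> {m..} \<longrightarrow>
              (\<exists>z. psum add y F = Some z \<and> z \<in> sigma S add H)))"

definition weak_product_subsystem ::
  "('a \<Rightarrow> 'a \<Rightarrow> 'a option) \<Rightarrow> (nat \<Rightarrow> 'a) \<Rightarrow> nat \<Rightarrow> (nat \<Rightarrow> 'a) \<Rightarrow> bool" where
  "weak_product_subsystem add y m x \<longleftrightarrow>
     (\<exists>H :: nat \<Rightarrow> nat set.
        (\<forall>n<m. finite (H n) \<and> H n \<noteq> {} \<and> psum add y (H n) = Some (x n)) \<and>
        (\<forall>n<m. \<forall>n'<m. n \<noteq> n' \<longrightarrow> H n \<inter> H n' = {}))"

definition FS :: "('a \<Rightarrow> 'a \<Rightarrow> 'a option) \<Rightarrow> (nat \<Rightarrow> 'a) \<Rightarrow> nat \<Rightarrow> 'a set" where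
  "FS add x m = {z. \<exists>F. F \<noteq> {} \<and> F \<subseteq> {..<m} \<and> psum add x F = Some z}"

end

theory Submission
  imports Defs "HOL-Library.Disjoint_Sets"
begin

text \<open>
  The proof runs through an idempotent ultrafilter \<open>p\<close> on the partial semigroup \<open>FIN\<close> of finite
  nonempty sets of naturals under disjoint union. It exists by the Ellis-Numakura argument: Zorn's
  lemma gives a minimal closed subsemigroup \<open>X\<close> of \<open>\<delta>FIN\<close>, and for \<open>e \<in> X\<close> minimality forces
  first \<open>X + e = X\<close> and then \<open>x + e = e\<close> for every \<open>x \<in> X\<close>, in particular \<open>e + e = e\<close>.

  Cut \<open>\<nat>\<close> into consecutive blocks of length \<open>m\<close>; for \<open>\<Gamma> \<in> FIN\<close> and \<open>F \<subseteq> {..<m}\<close>, \<open>blocks m \<Gamma> F\<close>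
  consists of the positions \<open>F\<close> inside the blocks numbered by \<open>\<Gamma>\<close>. For a pattern \<open>P\<close>, assigning a
  nonempty \<open>P i \<subseteq> {..<m}\<close> to each coordinate \<open>i\<close>, the map sending \<open>\<Gamma>\<close> to the tuple of sums of
  \<open>y i\<close> over \<open>blocks m \<Gamma> (P i)\<close> is a homomorphism from \<open>FIN\<close> to \<open>T\<close>, and for each \<open>x \<in> T\<close> it maps
  every \<open>\<Gamma>\<close> lying far enough out into \<open>\<phi>(x)\<close>. It therefore pushes \<open>p\<close> forward to an idempotent of \<open>\<delta>T\<close>, which contains
  the \<open>IP\<^sup>\<star>\<close> set \<open>C\<close>; so the preimage of \<open>C\<close> belongs to \<open>p\<close>. There are only finitely many
  patterns, hence some \<open>\<Gamma>\<close> lies in all these preimages, and \<open>x i n\<close> := the sum of \<open>y i\<close> over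
  \<open>blocks m \<Gamma> {n}\<close> is the required subsystem.
\<close>

section \<open>Finite sums in commutative partial semigroups\<close>

definition opt_add :: "('a \<Rightarrow> 'a \<Rightarrow> 'a option) \<Rightarrow> 'a option \<Rightarrow> 'a option \<Rightarrow> 'a option" where
  "opt_add add X Y = Option.bind X (\<lambda>a. Option.bind Y (add a))"

lemma partial_semigroup_closed:
  "partial_semigroup S add \<Longrightarrow> a \<in> S \<Longrightarrow> b \<in> S \<Longrightarrow> add a b = Some c \<Longrightarrow> c \<in> S"
  unfolding partial_semigroup_def by blast

lemma partial_semigroup_assoc:
  "partial_semigroup S add \<Longrightarrow> a \<in> S \<Longrightarrow> b \<in> S \<Longrightarrow> c \<in> S \<Longrightarrow>
   Option.bind (add a b) (\<lambda>d. add d c) = Option.bind (add b c) (add a)"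
  unfolding partial_semigroup_def by blast

lemma comm_partial_semigroupD:
  assumes "comm_partial_semigroup S add"
  shows "partial_semigroup S add" "a \<in> S \<Longrightarrow> b \<in> S \<Longrightarrow> add a b = add b a"
  using assms unfolding comm_partial_semigroup_def by blast+

lemma opt_add_closed:
  "partial_semigroup S add \<Longrightarrow> set_option X \<subseteq> S \<Longrightarrow> set_option Y \<subseteq> S \<Longrightarrow>
   set_option (opt_add add X Y) \<subseteq> S"
  by (cases X; cases Y) (auto simp: opt_add_def dest: partial_semigroup_closed)

lemma opt_add_assoc:
  assumes "partial_semigroup S add"
    and "set_option X \<subseteq> S" "set_option Y \<subseteq> S" "set_option Z \<subseteq> S"
  shows "opt_add add (opt_add add X Y) Z = opt_add add X (opt_add add Y Z)"
  using assms partial_semigroup_assoc[OF assms(1)]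
  by (cases X; cases Y; cases Z) (auto simp: opt_add_def)

lemma opt_add_commute:
  assumes "comm_partial_semigroup S add" "set_option X \<subseteq> S" "set_option Y \<subseteq> S"
  shows "opt_add add X Y = opt_add add Y X"
  using assms comm_partial_semigroupD(2)[OF assms(1)]
  by (cases X; cases Y) (auto simp: opt_add_def)

lemma psum_list_Cons:
  "xs \<noteq> [] \<Longrightarrow> psum_list add y (a # xs) = opt_add add (Some (y a)) (psum_list add y xs)"
  by (cases xs) (auto simp: opt_add_def)

lemma psum_list_closed:
  assumes "partial_semigroup S add" "\<forall>n. y n \<in> S"
  shows "set_option (psum_list add y xs) \<subseteq> S"
proof (induction xs rule: induct_list012)
  case (3 a b xs)
  then show ?case
    using opt_add_closed[OF assms(1)] assms(2) by (simp add: psum_list_Cons del: psum_list.simps)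
qed (use assms(2) in auto)

lemma psum_closed:
  "partial_semigroup S add \<Longrightarrow> \<forall>n. y n \<in> S \<Longrightarrow> psum add y F = Some z \<Longrightarrow> z \<in> S"
  using psum_list_closed unfolding psum_def by (fastforce split: if_splits)

lemma psum_list_insort:
  assumes cs: "comm_partial_semigroup S add" and yS: "\<forall>n. y n \<in> S" and "xs \<noteq> []"
  shows "psum_list add y (insort a xs) = opt_add add (Some (y a)) (psum_list add y xs)"
  using \<open>xs \<noteq> []\<close>
proof (induction xs)
  case (Cons b xs)
  note ps = comm_partial_semigroupD(1)[OF cs]
  note closed = psum_list_closed[OF ps yS]
  show ?case
  proof (cases "a \<le> b \<or> xs = []")
    case True
    then show ?thesis
      using opt_add_commute[OF cs, of "Some (y a)" "Some (y b)"] yS by (auto simp: opt_add_def)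
  next
    case False
    let ?a = "Some (y a)" and ?b = "Some (y b)" and ?s = "psum_list add y xs"
    have "psum_list add y (insort a (b # xs)) = opt_add add ?b (opt_add add ?a ?s)"
      using False Cons by (simp add: psum_list_Cons del: psum_list.simps)
    also have "\<dots> = opt_add add (opt_add add ?b ?a) ?s"
      using opt_add_assoc[OF ps] yS closed by simp
    also have "\<dots> = opt_add add (opt_add add ?a ?b) ?s"
      using opt_add_commute[OF cs, of ?a ?b] yS by simp
    also have "\<dots> = opt_add add ?a (psum_list add y (b # xs))"
      using opt_add_assoc[OF ps] yS closed False by (simp add: psum_list_Cons del: psum_list.simps)
    finally show ?thesis .
  qed
qed simp

lemma psum_singleton [simp]: "psum add y {a} = Some (y a)"
  by (simp add: psum_def)

lemma psum_insert:
  assumes "comm_partial_semigroup S add" "\<forall>n. y n \<in> S" "finite A" "A \<noteq> {}" "a \<notin> A"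
  shows "psum add y (insert a A) = opt_add add (Some (y a)) (psum add y A)"
  using assms psum_list_insort[OF assms(1,2)] by (simp add: psum_def sorted_list_of_set_insert)

lemma psum_Un:
  assumes cs: "comm_partial_semigroup S add" and yS: "\<forall>n. y n \<in> S"
    and "finite A" "A \<noteq> {}" "finite B" "B \<noteq> {}" "A \<inter> B = {}"
  shows "psum add y (A \<union> B) = opt_add add (psum add y A) (psum add y B)"
  using \<open>finite A\<close> \<open>A \<noteq> {}\<close> \<open>A \<inter> B = {}\<close>
proof (induction A rule: finite_ne_induct)
  case (singleton a)
  then show ?case using psum_insert[OF cs yS] assms by simp
next
  case (insert a A)
  note ps = comm_partial_semigroupD(1)[OF cs]
  have closed: "set_option (psum add y F) \<subseteq> S" for F
    using psum_closed[OF ps yS] by fastforce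
  have "psum add y (insert a A \<union> B) = opt_add add (Some (y a)) (psum add y (A \<union> B))"
    using psum_insert[OF cs yS] insert assms by simp
  also have "\<dots> = opt_add add (opt_add add (Some (y a)) (psum add y A)) (psum add y B)"
    using insert opt_add_assoc[OF ps] yS closed by simp
  also have "\<dots> = opt_add add (psum add y (insert a A)) (psum add y B)"
    using psum_insert[OF cs yS] insert by simp
  finally show ?case .
qed

lemma psum_UN:
  assumes cs: "comm_partial_semigroup S add" and yS: "\<forall>n. y n \<in> S" and xS: "\<forall>n. x n \<in> S"
    and F: "finite F" "F \<noteq> {}"
    and H: "\<And>n. n \<in> F \<Longrightarrow> finite (H n) \<and> H n \<noteq> {} \<and> psum add y (H n) = Some (x n)"
    and disj: "disjoint_family_on H F"
  shows "psum add x F = psum add y (\<Union>n\<in>F. H n)"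
  using F H disj
proof (induction F rule: finite_ne_induct)
  case (insert n F)
  have "psum add x (insert n F) = opt_add add (psum add y (H n)) (psum add y (\<Union>k\<in>F. H k))"
    using psum_insert[OF cs xS] insert by (simp add: disjoint_family_on_insert)
  also have "\<dots> = psum add y (H n \<union> (\<Union>k\<in>F. H k))"
    using psum_Un[OF cs yS] insert by (simp add: disjoint_family_on_insert)
  finally show ?case by simp
qed simp

section \<open>Ultrafilters\<close>

lemma ultrafilter_on_subset: "ultrafilter_on S p \<Longrightarrow> A \<in> p \<Longrightarrow> A \<subseteq> S"
  unfolding ultrafilter_on_def by blast

lemma ultrafilter_on_carrier: "ultrafilter_on S p \<Longrightarrow> S \<in> p"
  unfolding ultrafilter_on_def by blast

lemma ultrafilter_on_Int: "ultrafilter_on S p \<Longrightarrow> A \<in> p \<Longrightarrow> B \<in> p \<Longrightarrow> A \<inter> B \<in> p"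
  unfolding ultrafilter_on_def by blast

lemma ultrafilter_on_mono: "ultrafilter_on S p \<Longrightarrow> A \<in> p \<Longrightarrow> A \<subseteq> B \<Longrightarrow> B \<subseteq> S \<Longrightarrow> B \<in> p"
  unfolding ultrafilter_on_def by blast

lemma ultrafilter_on_nonempty: "ultrafilter_on S p \<Longrightarrow> A \<in> p \<Longrightarrow> A \<noteq> {}"
  unfolding ultrafilter_on_def by blast

lemma ultrafilter_on_Diff_iff:
  assumes "ultrafilter_on S p" "A \<subseteq> S"
  shows "S - A \<in> p \<longleftrightarrow> A \<notin> p"
proof
  assume "S - A \<in> p"
  then show "A \<notin> p" using ultrafilter_on_Int[OF assms(1)] ultrafilter_on_nonempty[OF assms(1)] by blast
qed (use assms in \<open>unfold ultrafilter_on_def, blast\<close>)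

lemma ultrafilter_on_Int_iff:
  assumes "ultrafilter_on S p" "P \<in> p" "X \<subseteq> S"
  shows "X \<inter> P \<in> p \<longleftrightarrow> X \<in> p"
  using ultrafilter_on_Int[OF assms(1) _ assms(2)] ultrafilter_on_mono[OF assms(1) _ _ assms(3)] by blast

lemma ultrafilter_on_Inter:
  assumes "ultrafilter_on S p" "finite G" "G \<subseteq> p"
  shows "S \<inter> \<Inter>G \<in> p"
  using assms(2,3)
proof (induction G rule: finite_induct)
  case (insert A G)
  then have "A \<inter> (S \<inter> \<Inter>G) \<in> p" using ultrafilter_on_Int[OF assms(1)] by blast
  then show ?case by (simp add: Int_left_commute)
qed (use ultrafilter_on_carrier[OF assms(1)] in simp)

lemma ultrafilter_on_eqI:
  assumes "ultrafilter_on S p" "ultrafilter_on S q" "p \<subseteq> q"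
  shows "p = q"
proof (intro equalityI subsetI)
  fix A assume "A \<in> q"
  then have "S - A \<notin> q"
    using ultrafilter_on_Diff_iff[OF assms(2) ultrafilter_on_subset[OF assms(2)]] by blast
  then show "A \<in> p"
    using ultrafilter_on_Diff_iff[OF assms(1) ultrafilter_on_subset[OF assms(2) \<open>A \<in> q\<close>]] assms(3)
    by blast
qed (use assms(3) in blast)

definition fip_on :: "'a set \<Rightarrow> 'a set set \<Rightarrow> bool" where
  "fip_on S G \<longleftrightarrow> G \<subseteq> Pow S \<and> (\<forall>G'. finite G' \<and> G' \<subseteq> G \<longrightarrow> S \<inter> \<Inter>G' \<noteq> {})"

lemma fip_on_insert:
  assumes "fip_on S M" "B \<subseteq> S"
    and "\<And>G'. finite G' \<Longrightarrow> G' \<subseteq> M \<Longrightarrow> S \<inter> \<Inter>G' \<inter> B \<noteq> {}"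
  shows "fip_on S (insert B M)"
  unfolding fip_on_def
proof (intro conjI allI impI)
  show "insert B M \<subseteq> Pow S" using assms(1,2) unfolding fip_on_def by blast
  fix G' assume "finite G' \<and> G' \<subseteq> insert B M"
  then have "S \<inter> \<Inter>(G' - {B}) \<inter> B \<noteq> {}" using assms(3) by blast
  then show "S \<inter> \<Inter>G' \<noteq> {}" by blast
qed

lemma ex_ultrafilter_superset:
  assumes "fip_on S G"
  shows "\<exists>U. ultrafilter_on S U \<and> G \<subseteq> U"
proof -
  define \<A> where "\<A> = {M. fip_on S M \<and> G \<subseteq> M}"
  have "\<Union>\<C> \<in> \<A>" if "\<C> \<noteq> {}" and chain: "subset.chain \<A> \<C>" for \<C>
  proof -
    have C: "fip_on S M" "G \<subseteq> M" if "M \<in> \<C>" for M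
      using chain that unfolding subset.chain_def \<A>_def by blast+
    have "S \<inter> \<Inter>G' \<noteq> {}" if G': "finite G'" "G' \<subseteq> \<Union>\<C>" for G'
    proof -
      obtain M where "M \<in> \<C>" "G' \<subseteq> M"
        using finite_subset_Union_chain[OF G' \<open>\<C> \<noteq> {}\<close> chain] by blast
      then show ?thesis using C(1) \<open>finite G'\<close> unfolding fip_on_def by blast
    qed
    moreover have "\<Union>\<C> \<subseteq> Pow S" "G \<subseteq> \<Union>\<C>"
      using C \<open>\<C> \<noteq> {}\<close> unfolding fip_on_def by blast+
    ultimately show ?thesis unfolding \<A>_def fip_on_def by blast
  qed
  moreover have "G \<in> \<A>" using assms unfolding \<A>_def by blast
  ultimately obtain M where "M \<in> \<A>" and max: "\<And>X. X \<in> \<A> \<Longrightarrow> M \<subseteq> X \<Longrightarrow> X = M"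
    using subset_Zorn_nonempty[of \<A>] by blast
  then have M: "fip_on S M" "G \<subseteq> M" unfolding \<A>_def by auto
  have grow: "B \<in> M" if "B \<subseteq> S" "\<And>G'. finite G' \<Longrightarrow> G' \<subseteq> M \<Longrightarrow> S \<inter> \<Inter>G' \<inter> B \<noteq> {}" for B
    using max[of "insert B M"] fip_on_insert[OF M(1) that] M(2) unfolding \<A>_def by blast
  have meet: "S \<inter> \<Inter>G' \<noteq> {}" if "finite G'" "G' \<subseteq> M" for G'
    using M(1) that unfolding fip_on_def by blast
  have "ultrafilter_on S M"
    unfolding ultrafilter_on_def
  proof (intro conjI ballI allI impI)
    show "M \<subseteq> Pow S" using M(1) unfolding fip_on_def by blast
    show "S \<in> M" by (rule grow) (use meet in auto)
    show "{} \<notin> M" using meet[of "{{}}"] by blast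
  next
    fix A B assume "A \<in> M" "B \<in> M"
    show "A \<inter> B \<in> M"
    proof (rule grow)
      show "A \<inter> B \<subseteq> S" using \<open>A \<in> M\<close> M(1) unfolding fip_on_def by blast
      fix G' assume "finite G'" "G' \<subseteq> M"
      then show "S \<inter> \<Inter>G' \<inter> (A \<inter> B) \<noteq> {}"
        using meet[of "insert A (insert B G')"] \<open>A \<in> M\<close> \<open>B \<in> M\<close> by auto
    qed
  next
    fix A B assume "A \<in> M" "A \<subseteq> B \<and> B \<subseteq> S"
    show "B \<in> M"
    proof (rule grow)
      fix G' assume "finite G'" "G' \<subseteq> M"
      then show "S \<inter> \<Inter>G' \<inter> B \<noteq> {}"
        using meet[of "insert A G'"] \<open>A \<in> M\<close> \<open>A \<subseteq> B \<and> B \<subseteq> S\<close> by auto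
    qed (use \<open>A \<subseteq> B \<and> B \<subseteq> S\<close> in blast)
  next
    fix A assume "A \<subseteq> S"
    show "A \<in> M \<or> S - A \<in> M"
    proof (cases "\<forall>G'. finite G' \<and> G' \<subseteq> M \<longrightarrow> S \<inter> \<Inter>G' \<inter> A \<noteq> {}")
      case True
      then show ?thesis using grow[OF \<open>A \<subseteq> S\<close>] by blast
    next
      case False
      then obtain G1 where G1: "finite G1" "G1 \<subseteq> M" "S \<inter> \<Inter>G1 \<inter> A = {}" by blast
      have "S - A \<in> M"
      proof (rule grow)
        fix G' assume "finite G'" "G' \<subseteq> M"
        then show "S \<inter> \<Inter>G' \<inter> (S - A) \<noteq> {}"
          using meet[of "G' \<union> G1"] G1 by blast
      qed blast
      then show ?thesis ..
    qed
  qed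
  then show ?thesis using M(2) by blast
qed

section \<open>The semigroup \<open>\<delta>S\<close>\<close>

lemma deltaS_ultrafilter_on: "p \<in> deltaS S add \<Longrightarrow> ultrafilter_on S p"
  unfolding deltaS_def by blast

lemma deltaS_phi: "p \<in> deltaS S add \<Longrightarrow> x \<in> S \<Longrightarrow> phi S add x \<in> p"
  unfolding deltaS_def by blast

lemma ex_deltaS_superset:
  assumes "G \<subseteq> Pow S"
    and "\<And>G' H. finite G' \<Longrightarrow> G' \<subseteq> G \<Longrightarrow> finite H \<Longrightarrow> H \<subseteq> S \<Longrightarrow>
           S \<inter> \<Inter>G' \<inter> \<Inter>(phi S add ` H) \<noteq> {}"
  shows "\<exists>p\<in>deltaS S add. G \<subseteq> p"
proof -
  have "fip_on S (G \<union> phi S add ` S)"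
    unfolding fip_on_def
  proof (intro conjI allI impI)
    show "G \<union> phi S add ` S \<subseteq> Pow S" using assms(1) unfolding phi_def by blast
    fix F assume F: "finite F \<and> F \<subseteq> G \<union> phi S add ` S"
    then obtain H where H: "H \<subseteq> S" "finite H" "F - G = phi S add ` H"
      using finite_subset_image[of "F - G" "phi S add" S] by blast
    have "S \<inter> \<Inter>(F \<inter> G) \<inter> \<Inter>(phi S add ` H) \<noteq> {}"
      using assms(2)[of "F \<inter> G" H] F H by blast
    moreover have "\<Inter>F = \<Inter>(F \<inter> G) \<inter> \<Inter>(F - G)" by blast
    ultimately show "S \<inter> \<Inter>F \<noteq> {}" using H(3) by (simp add: Int_assoc)
  qed
  then obtain U where "ultrafilter_on S U" "G \<union> phi S add ` S \<subseteq> U"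
    using ex_ultrafilter_superset by blast
  then show ?thesis unfolding deltaS_def by blast
qed

lemma ex_deltaS_superset_finite:
  assumes "G \<subseteq> Pow S" and "\<And>G'. finite G' \<Longrightarrow> G' \<subseteq> G \<Longrightarrow> \<exists>q\<in>deltaS S add. G' \<subseteq> q"
  shows "\<exists>p\<in>deltaS S add. G \<subseteq> p"
proof (rule ex_deltaS_superset[OF assms(1)])
  fix G' H assume "finite G'" "G' \<subseteq> G" "finite H" "H \<subseteq> S"
  obtain q where q: "q \<in> deltaS S add" "G' \<subseteq> q" using assms(2)[OF \<open>finite G'\<close> \<open>G' \<subseteq> G\<close>] by blast
  note uq = deltaS_ultrafilter_on[OF q(1)]
  have "phi S add ` H \<subseteq> q" using deltaS_phi[OF q(1)] \<open>H \<subseteq> S\<close> by blast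
  then have "S \<inter> \<Inter>(G' \<union> phi S add ` H) \<in> q"
    using q(2) \<open>finite G'\<close> \<open>finite H\<close> by (intro ultrafilter_on_Inter[OF uq]) auto
  then show "S \<inter> \<Inter>G' \<inter> \<Inter>(phi S add ` H) \<noteq> {}"
    using ultrafilter_on_nonempty[OF uq] by (simp add: Inter_Un_distrib Int_assoc)
qed

lemma deltaS_nonempty:
  assumes "adequate S add" "S \<noteq> {}"
  shows "deltaS S add \<noteq> {}"
proof -
  have "S \<inter> \<Inter>(phi S add ` H) \<noteq> {}" if "finite H" "H \<subseteq> S" for H
  proof (cases "H = {}")
    case False
    then have "sigma S add H \<noteq> {}" using assms(1) that unfolding adequate_def by blast
    moreover have "sigma S add H \<subseteq> S" using False unfolding sigma_def phi_def by blast
    ultimately show ?thesis unfolding sigma_def by auto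
  qed (use assms(2) in simp)
  then show ?thesis using ex_deltaS_superset[of "{}" S add] by auto
qed

lemma minus_shift_iff: "y \<in> minus_shift S add x A \<longleftrightarrow> y \<in> S \<and> (\<exists>z\<in>A. add x y = Some z)"
  unfolding minus_shift_def phi_def by auto

lemma minus_shift_subset: "minus_shift S add x A \<subseteq> S"
  unfolding minus_shift_def phi_def by auto

lemma minus_shift_Int: "minus_shift S add x (A \<inter> B) = minus_shift S add x A \<inter> minus_shift S add x B"
  by (auto simp: minus_shift_iff)

lemma minus_shift_mono: "A \<subseteq> B \<Longrightarrow> minus_shift S add x A \<subseteq> minus_shift S add x B"
  unfolding minus_shift_iff subset_iff by blast

lemma minus_shift_empty [simp]: "minus_shift S add x {} = {}"
  unfolding minus_shift_def by simp

lemma minus_shift_Diff: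
  assumes "partial_semigroup S add" "x \<in> S"
  shows "minus_shift S add x (S - A) = phi S add x - minus_shift S add x A"
  using partial_semigroup_closed[OF assms] by (auto simp: minus_shift_iff phi_def)

lemma minus_shift_carrier:
  assumes "partial_semigroup S add" "x \<in> S"
  shows "minus_shift S add x S = phi S add x"
  using minus_shift_Diff[OF assms, of "{}"] by simp

lemma minus_shift_minus_shift:
  assumes ps: "partial_semigroup S add" and "x \<in> S" "y \<in> S" and z: "add x y = Some z"
  shows "minus_shift S add z A = minus_shift S add y (minus_shift S add x A)"
proof -
  have "add z w = Option.bind (add y w) (add x)" if "w \<in> S" for w
    using partial_semigroup_assoc[OF ps \<open>x \<in> S\<close> \<open>y \<in> S\<close> that] z by simp
  then show ?thesis
    using partial_semigroup_closed[OF ps \<open>y \<in> S\<close>]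
    by (fastforce simp: minus_shift_iff bind_eq_Some_conv)
qed

lemma phi_subset_minus_shift_phi:
  assumes ps: "partial_semigroup S add" and "x \<in> S" "z \<in> S" and u: "add z x = Some u"
  shows "phi S add u \<subseteq> minus_shift S add x (phi S add z)"
proof
  fix w assume "w \<in> phi S add u"
  then obtain b where w: "w \<in> S" "add u w = Some b" unfolding phi_def by auto
  then have "Option.bind (add x w) (add z) = Some b"
    using partial_semigroup_assoc[OF ps \<open>z \<in> S\<close> \<open>x \<in> S\<close> \<open>w \<in> S\<close>] u by simp
  then obtain v where "add x w = Some v" "add z v = Some b" by (cases "add x w") auto
  then show "w \<in> minus_shift S add x (phi S add z)"
    using partial_semigroup_closed[OF ps \<open>x \<in> S\<close> \<open>w \<in> S\<close>] w(1) by (auto simp: minus_shift_iff phi_def)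
qed

definition minus_shift_in :: "'a set \<Rightarrow> ('a \<Rightarrow> 'a \<Rightarrow> 'a option) \<Rightarrow> 'a set set \<Rightarrow> 'a set \<Rightarrow> 'a set" where
  "minus_shift_in S add q A = {x \<in> S. minus_shift S add x A \<in> q}"

lemma uf_plus_iff: "A \<in> uf_plus S add p q \<longleftrightarrow> A \<subseteq> S \<and> minus_shift_in S add q A \<in> p"
  unfolding uf_plus_def minus_shift_in_def by simp

lemma minus_shift_in_subset: "minus_shift_in S add q A \<subseteq> S"
  unfolding minus_shift_in_def by auto

lemma minus_shift_in_Int:
  assumes "ultrafilter_on S q"
  shows "minus_shift_in S add q (A \<inter> B) = minus_shift_in S add q A \<inter> minus_shift_in S add q B"
  unfolding minus_shift_in_def minus_shift_Int
  using ultrafilter_on_Int[OF assms] ultrafilter_on_mono[OF assms _ _ minus_shift_subset] by blast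

lemma minus_shift_in_mono:
  assumes "ultrafilter_on S q" "A \<subseteq> B"
  shows "minus_shift_in S add q A \<subseteq> minus_shift_in S add q B"
  unfolding minus_shift_in_def
  using ultrafilter_on_mono[OF assms(1) _ minus_shift_mono[OF assms(2)] minus_shift_subset] by blast

lemma minus_shift_in_empty:
  assumes "ultrafilter_on S q"
  shows "minus_shift_in S add q {} = {}"
  using ultrafilter_on_nonempty[OF assms] by (auto simp: minus_shift_in_def)

lemma minus_shift_in_carrier:
  assumes "partial_semigroup S add" "q \<in> deltaS S add"
  shows "minus_shift_in S add q S = S"
  unfolding minus_shift_in_def using minus_shift_carrier[OF assms(1)] deltaS_phi[OF assms(2)] by auto

lemma minus_shift_in_Diff:
  assumes ps: "partial_semigroup S add" and q: "q \<in> deltaS S add"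
  shows "minus_shift_in S add q (S - A) = S - minus_shift_in S add q A"
proof -
  note uq = deltaS_ultrafilter_on[OF q]
  have "minus_shift S add x (S - A) \<in> q \<longleftrightarrow> minus_shift S add x A \<notin> q" if "x \<in> S" for x
  proof -
    have "minus_shift S add x (S - A) = (S - minus_shift S add x A) \<inter> phi S add x"
      using minus_shift_Diff[OF ps that] unfolding phi_def by blast
    then show ?thesis
      using ultrafilter_on_Int_iff[OF uq deltaS_phi[OF q that]]
        ultrafilter_on_Diff_iff[OF uq minus_shift_subset] by simp
  qed
  then show ?thesis unfolding minus_shift_in_def by blast
qed

lemma uf_plus_in_deltaS:
  assumes ps: "partial_semigroup S add" and p: "p \<in> deltaS S add" and q: "q \<in> deltaS S add"
  shows "uf_plus S add p q \<in> deltaS S add"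
proof -
  note up = deltaS_ultrafilter_on[OF p] and uq = deltaS_ultrafilter_on[OF q]
  have "ultrafilter_on S (uf_plus S add p q)"
    unfolding ultrafilter_on_def
  proof (intro conjI ballI allI impI)
    show "uf_plus S add p q \<subseteq> Pow S" by (auto simp: uf_plus_iff)
    show "S \<in> uf_plus S add p q"
      unfolding uf_plus_iff minus_shift_in_carrier[OF ps q] using ultrafilter_on_carrier[OF up] by simp
    show "{} \<notin> uf_plus S add p q"
      unfolding uf_plus_iff minus_shift_in_empty[OF uq] using ultrafilter_on_nonempty[OF up] by blast
  next
    fix A B assume "A \<in> uf_plus S add p q" "B \<in> uf_plus S add p q"
    then show "A \<inter> B \<in> uf_plus S add p q"
      unfolding uf_plus_iff minus_shift_in_Int[OF uq] using ultrafilter_on_Int[OF up] by blast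
  next
    fix A B assume "A \<in> uf_plus S add p q" "A \<subseteq> B \<and> B \<subseteq> S"
    then show "B \<in> uf_plus S add p q"
      unfolding uf_plus_iff
      using ultrafilter_on_mono[OF up _ minus_shift_in_mono[OF uq] minus_shift_in_subset] by blast
  next
    fix A assume "A \<subseteq> S"
    then show "A \<in> uf_plus S add p q \<or> S - A \<in> uf_plus S add p q"
      unfolding uf_plus_iff minus_shift_in_Diff[OF ps q]
      using ultrafilter_on_Diff_iff[OF up minus_shift_in_subset] by blast
  qed
  moreover have "phi S add z \<in> uf_plus S add p q" if "z \<in> S" for z
  proof -
    have "phi S add z \<subseteq> minus_shift_in S add q (phi S add z)"
    proof
      fix x assume "x \<in> phi S add z"
      then obtain u where x: "x \<in> S" and u: "add z x = Some u" unfolding phi_def by auto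
      have "phi S add u \<in> q"
        using deltaS_phi[OF q partial_semigroup_closed[OF ps \<open>z \<in> S\<close> x u]] .
      then have "minus_shift S add x (phi S add z) \<in> q"
        using ultrafilter_on_mono[OF uq _ phi_subset_minus_shift_phi[OF ps x \<open>z \<in> S\<close> u]
            minus_shift_subset] by blast
      then show "x \<in> minus_shift_in S add q (phi S add z)"
        unfolding minus_shift_in_def using x by blast
    qed
    then have "minus_shift_in S add q (phi S add z) \<in> p"
      using ultrafilter_on_mono[OF up deltaS_phi[OF p that] _ minus_shift_in_subset] by blast
    then show ?thesis unfolding uf_plus_iff phi_def by blast
  qed
  ultimately show ?thesis unfolding deltaS_def by blast
qed

lemma minus_shift_in_uf_plus:
  assumes ps: "partial_semigroup S add" and q: "q \<in> deltaS S add"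
  shows "minus_shift_in S add q (minus_shift_in S add r A) = minus_shift_in S add (uf_plus S add q r) A"
proof -
  note uq = deltaS_ultrafilter_on[OF q]
  have "minus_shift S add x (minus_shift_in S add r A) \<in> q \<longleftrightarrow>
        minus_shift_in S add r (minus_shift S add x A) \<in> q" if x: "x \<in> S" for x
  proof -
    have "minus_shift S add x (minus_shift_in S add r A) \<inter> phi S add x =
          minus_shift_in S add r (minus_shift S add x A) \<inter> phi S add x"
    proof (intro set_eqI iffI)
      fix y assume "y \<in> minus_shift S add x (minus_shift_in S add r A) \<inter> phi S add x"
      then obtain z where "y \<in> S" "z \<in> S" "add x y = Some z" "minus_shift S add z A \<in> r"
        by (auto simp: minus_shift_iff minus_shift_in_def)
      then show "y \<in> minus_shift_in S add r (minus_shift S add x A) \<inter> phi S add x"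
        using minus_shift_minus_shift[OF ps x] by (auto simp: minus_shift_in_def phi_def)
    next
      fix y assume y: "y \<in> minus_shift_in S add r (minus_shift S add x A) \<inter> phi S add x"
      then obtain z where "y \<in> S" "add x y = Some z" unfolding phi_def by auto
      then show "y \<in> minus_shift S add x (minus_shift_in S add r A) \<inter> phi S add x"
        using y minus_shift_minus_shift[OF ps x] partial_semigroup_closed[OF ps x]
        by (auto simp: minus_shift_iff minus_shift_in_def phi_def)
    qed
    then show ?thesis
      using ultrafilter_on_Int_iff[OF uq deltaS_phi[OF q x]] minus_shift_subset minus_shift_in_subset
      by metis
  qed
  moreover have "minus_shift_in S add r (minus_shift S add x A) \<in> q \<longleftrightarrow>
                 minus_shift S add x A \<in> uf_plus S add q r" for x
    unfolding uf_plus_iff using minus_shift_subset[of S add x A] by blast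
  ultimately show ?thesis
    unfolding minus_shift_in_def by auto
qed

lemma uf_plus_assoc:
  assumes "partial_semigroup S add" "q \<in> deltaS S add"
  shows "uf_plus S add (uf_plus S add p q) r = uf_plus S add p (uf_plus S add q r)"
proof (intro set_eqI)
  fix A
  have "minus_shift_in S add r A \<subseteq> S" by (rule minus_shift_in_subset)
  then show "A \<in> uf_plus S add (uf_plus S add p q) r \<longleftrightarrow> A \<in> uf_plus S add p (uf_plus S add q r)"
    unfolding uf_plus_iff minus_shift_in_uf_plus[OF assms, symmetric] by blast
qed

section \<open>Idempotents in \<open>\<delta>S\<close>\<close>

definition deltaS_above :: "'a set \<Rightarrow> ('a \<Rightarrow> 'a \<Rightarrow> 'a option) \<Rightarrow> 'a set set \<Rightarrow> 'a set set set" where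
  "deltaS_above S add M = {p \<in> deltaS S add. M \<subseteq> p}"

text \<open>Closedness in the Stone topology: the closure of \<open>X\<close> consists of the points of \<open>\<delta>S\<close> containing \<open>\<Inter>X\<close>.\<close>

definition closed_in_deltaS :: "'a set \<Rightarrow> ('a \<Rightarrow> 'a \<Rightarrow> 'a option) \<Rightarrow> 'a set set set \<Rightarrow> bool" where
  "closed_in_deltaS S add X \<longleftrightarrow> X \<subseteq> deltaS S add \<and> (\<forall>p\<in>deltaS S add. \<Inter>X \<subseteq> p \<longrightarrow> p \<in> X)"

definition uf_subsemigroup :: "'a set \<Rightarrow> ('a \<Rightarrow> 'a \<Rightarrow> 'a option) \<Rightarrow> 'a set set set \<Rightarrow> bool" where
  "uf_subsemigroup S add X \<longleftrightarrow> (\<forall>p\<in>X. \<forall>q\<in>X. uf_plus S add p q \<in> X)"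

lemma closed_in_deltaS_eq_deltaS_above:
  "closed_in_deltaS S add X \<Longrightarrow> deltaS_above S add (\<Inter>X) = X"
  unfolding closed_in_deltaS_def deltaS_above_def by blast

lemma Inter_deltaS_subset_Pow: "X \<noteq> {} \<Longrightarrow> X \<subseteq> deltaS S add \<Longrightarrow> \<Inter>X \<subseteq> Pow S"
  using ultrafilter_on_subset[OF deltaS_ultrafilter_on] by blast

lemma ex_minimal_closed_uf_subsemigroup:
  assumes ps: "partial_semigroup S add" and "adequate S add" "S \<noteq> {}"
  obtains X where "X \<noteq> {}" "closed_in_deltaS S add X" "uf_subsemigroup S add X"
    and "\<And>Y. Y \<noteq> {} \<Longrightarrow> Y \<subseteq> X \<Longrightarrow> closed_in_deltaS S add Y \<Longrightarrow> uf_subsemigroup S add Y \<Longrightarrow> Y = X"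
proof -
  txt \<open>Zorn's lemma runs over the families \<open>M\<close> cutting out the closed sets \<open>deltaS_above S add M\<close>;
    a maximal family gives a minimal closed set.\<close>
  define \<A> where "\<A> = {M. M \<subseteq> Pow S \<and> deltaS_above S add M \<noteq> {} \<and>
                          uf_subsemigroup S add (deltaS_above S add M)}"
  have "{} \<in> \<A>"
    using deltaS_nonempty[OF assms(2,3)] uf_plus_in_deltaS[OF ps]
    unfolding \<A>_def deltaS_above_def uf_subsemigroup_def by auto
  moreover have "\<Union>\<C> \<in> \<A>" if "\<C> \<noteq> {}" and chain: "subset.chain \<A> \<C>" for \<C>
  proof -
    have C: "M \<subseteq> Pow S" "deltaS_above S add M \<noteq> {}" "uf_subsemigroup S add (deltaS_above S add M)"
      if "M \<in> \<C>" for M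
      using chain that unfolding subset.chain_def \<A>_def by blast+
    have "\<exists>p\<in>deltaS S add. \<Union>\<C> \<subseteq> p"
    proof (rule ex_deltaS_superset_finite)
      show "\<Union>\<C> \<subseteq> Pow S" using C(1) by blast
      fix G' assume G': "finite G'" "G' \<subseteq> \<Union>\<C>"
      obtain M where M: "M \<in> \<C>" "G' \<subseteq> M"
        using finite_subset_Union_chain[OF G' \<open>\<C> \<noteq> {}\<close> chain] by blast
      obtain q where "q \<in> deltaS_above S add M" using C(2)[OF M(1)] by blast
      then show "\<exists>q\<in>deltaS S add. G' \<subseteq> q"
        using M(2) unfolding deltaS_above_def by blast
    qed
    moreover have "uf_subsemigroup S add (deltaS_above S add (\<Union>\<C>))"
      unfolding uf_subsemigroup_def
    proof (intro ballI)
      fix p q assume pq: "p \<in> deltaS_above S add (\<Union>\<C>)" "q \<in> deltaS_above S add (\<Union>\<C>)"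
      then have "M \<subseteq> uf_plus S add p q" if "M \<in> \<C>" for M
        using C(3)[OF that] that unfolding uf_subsemigroup_def deltaS_above_def by blast
      then show "uf_plus S add p q \<in> deltaS_above S add (\<Union>\<C>)"
        using pq uf_plus_in_deltaS[OF ps] unfolding deltaS_above_def by blast
    qed
    ultimately show ?thesis using C(1) unfolding \<A>_def deltaS_above_def by blast
  qed
  ultimately obtain M0 where "M0 \<in> \<A>" and max: "\<And>M. M \<in> \<A> \<Longrightarrow> M0 \<subseteq> M \<Longrightarrow> M = M0"
    using subset_Zorn_nonempty[of \<A>] by blast
  show thesis
  proof
    let ?X = "deltaS_above S add M0"
    show "?X \<noteq> {}" "uf_subsemigroup S add ?X" using \<open>M0 \<in> \<A>\<close> unfolding \<A>_def by blast+
    then show "closed_in_deltaS S add ?X"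
      unfolding closed_in_deltaS_def deltaS_above_def by blast
    fix Y assume Y: "Y \<noteq> {}" "Y \<subseteq> ?X" "closed_in_deltaS S add Y" "uf_subsemigroup S add Y"
    have "\<Inter>Y \<subseteq> Pow S"
      using Inter_deltaS_subset_Pow[OF Y(1)] Y(3) unfolding closed_in_deltaS_def by blast
    then have "\<Inter>Y \<in> \<A>"
      using Y(1,4) closed_in_deltaS_eq_deltaS_above[OF Y(3)] unfolding \<A>_def by simp
    moreover have "M0 \<subseteq> \<Inter>Y" using Y(2) unfolding deltaS_above_def by blast
    ultimately show "Y = ?X" using max closed_in_deltaS_eq_deltaS_above[OF Y(3)] by metis
  qed
qed

lemma closed_in_deltaS_right_translate:
  assumes ps: "partial_semigroup S add" and e: "e \<in> deltaS S add"
    and X: "X \<noteq> {}" "closed_in_deltaS S add X"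
  shows "closed_in_deltaS S add ((\<lambda>x. uf_plus S add x e) ` X)"
  unfolding closed_in_deltaS_def
proof (intro conjI ballI impI)
  have Xd: "X \<subseteq> deltaS S add" using X(2) unfolding closed_in_deltaS_def by blast
  then show "(\<lambda>x. uf_plus S add x e) ` X \<subseteq> deltaS S add" using uf_plus_in_deltaS[OF ps _ e] by blast
  fix p assume p: "p \<in> deltaS S add" and p_above: "\<Inter>((\<lambda>x. uf_plus S add x e) ` X) \<subseteq> p"
  note up = deltaS_ultrafilter_on[OF p] and ue = deltaS_ultrafilter_on[OF e]
  txt \<open>By compactness some \<open>x \<in> X\<close> contains \<open>minus_shift_in S add e A\<close> for all \<open>A \<in> p\<close>;
    then \<open>p \<subseteq> x + e\<close>, so \<open>p = x + e\<close>.\<close>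
  have "\<exists>x\<in>deltaS S add. \<Inter>X \<union> minus_shift_in S add e ` p \<subseteq> x"
  proof (rule ex_deltaS_superset_finite)
    show "\<Inter>X \<union> minus_shift_in S add e ` p \<subseteq> Pow S"
      using Inter_deltaS_subset_Pow[OF X(1) Xd] minus_shift_in_subset[of S add e] by blast
    fix G assume G: "finite G" "G \<subseteq> \<Inter>X \<union> minus_shift_in S add e ` p"
    then obtain P where P: "P \<subseteq> p" "finite P" "G - \<Inter>X = minus_shift_in S add e ` P"
      using finite_subset_image[of "G - \<Inter>X" "minus_shift_in S add e" p] by blast
    define A where "A = S \<inter> \<Inter>P"
    have "A \<in> p" unfolding A_def using ultrafilter_on_Inter[OF up P(2,1)] .
    have "\<exists>x\<in>X. minus_shift_in S add e A \<in> x"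
    proof (rule ccontr)
      assume "\<not> ?thesis"
      then have "S - A \<in> uf_plus S add x e" if "x \<in> X" for x
        using ultrafilter_on_Diff_iff[OF deltaS_ultrafilter_on[OF uf_plus_in_deltaS[OF ps _ e]]]
          that Xd unfolding uf_plus_iff A_def by blast
      then have "S - A \<in> p" using p_above by blast
      then show False
        using \<open>A \<in> p\<close> ultrafilter_on_Diff_iff[OF up] unfolding A_def by blast
    qed
    then obtain x where x: "x \<in> X" "minus_shift_in S add e A \<in> x" by blast
    have "minus_shift_in S add e B \<in> x" if "B \<in> P" for B
      using ultrafilter_on_mono[OF deltaS_ultrafilter_on _ minus_shift_in_mono[OF ue]
          minus_shift_in_subset] x Xd that unfolding A_def by blast
    moreover have "G \<subseteq> \<Inter>X \<union> minus_shift_in S add e ` P" using P(3) by blast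
    ultimately have "G \<subseteq> x" using Inter_lower[OF x(1)] by blast
    then show "\<exists>q\<in>deltaS S add. G \<subseteq> q" using x(1) Xd by blast
  qed
  then obtain x where x: "x \<in> deltaS S add" "\<Inter>X \<subseteq> x" "minus_shift_in S add e ` p \<subseteq> x" by blast
  have "x \<in> X" using X(2) x(1,2) unfolding closed_in_deltaS_def by blast
  moreover have "p \<subseteq> uf_plus S add x e"
  proof
    fix A assume "A \<in> p"
    then show "A \<in> uf_plus S add x e"
      using x(3) ultrafilter_on_subset[OF up \<open>A \<in> p\<close>] unfolding uf_plus_iff by blast
  qed
  then have "p = uf_plus S add x e"
    by (rule ultrafilter_on_eqI[OF up deltaS_ultrafilter_on[OF uf_plus_in_deltaS[OF ps x(1) e]]])
  ultimately show "p \<in> (\<lambda>x. uf_plus S add x e) ` X" by blast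
qed

lemma closed_in_deltaS_left_identities:
  assumes ps: "partial_semigroup S add" and e: "e \<in> deltaS S add"
    and X: "closed_in_deltaS S add X" and ne: "{x \<in> X. uf_plus S add x e = e} \<noteq> {}"
  shows "closed_in_deltaS S add {x \<in> X. uf_plus S add x e = e}" (is "closed_in_deltaS S add ?Y")
  unfolding closed_in_deltaS_def
proof (intro conjI ballI impI)
  have Xd: "X \<subseteq> deltaS S add" and X_closed: "\<And>p. p \<in> deltaS S add \<Longrightarrow> \<Inter>X \<subseteq> p \<Longrightarrow> p \<in> X"
    using X unfolding closed_in_deltaS_def by blast+
  then show "?Y \<subseteq> deltaS S add" by blast
  fix p assume p: "p \<in> deltaS S add" and p_above: "\<Inter>?Y \<subseteq> p"
  note up = deltaS_ultrafilter_on[OF p]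
  have "\<Inter>X \<subseteq> \<Inter>?Y" by (rule Inter_anti_mono) blast
  then have "p \<in> X" using X_closed[OF p] p_above by blast
  moreover have "uf_plus S add p e \<subseteq> e"
  proof
    fix A assume "A \<in> uf_plus S add p e"
    then have A: "A \<subseteq> S" "minus_shift_in S add e A \<in> p" unfolding uf_plus_iff by auto
    show "A \<in> e"
    proof (rule ccontr)
      assume "A \<notin> e"
      have "S - minus_shift_in S add e A \<in> y" if y: "y \<in> ?Y" for y
      proof -
        have "A \<notin> uf_plus S add y e" using y \<open>A \<notin> e\<close> by simp
        then have "minus_shift_in S add e A \<notin> y" using A(1) unfolding uf_plus_iff by blast
        moreover have "y \<in> deltaS S add" using y Xd by blast
        ultimately show ?thesis
          using ultrafilter_on_Diff_iff[OF deltaS_ultrafilter_on minus_shift_in_subset] by blast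
      qed
      then have "S - minus_shift_in S add e A \<in> p" using p_above by blast
      then show False using A(2) ultrafilter_on_Diff_iff[OF up minus_shift_in_subset] by blast
    qed
  qed
  then have "uf_plus S add p e = e"
    by (rule ultrafilter_on_eqI[OF deltaS_ultrafilter_on[OF uf_plus_in_deltaS[OF ps p e]]
          deltaS_ultrafilter_on[OF e]])
  ultimately show "p \<in> ?Y" by blast
qed

lemma uf_subsemigroup_right_translate:
  assumes ps: "partial_semigroup S add" and X: "uf_subsemigroup S add X" "X \<subseteq> deltaS S add"
    and "e \<in> X"
  shows "uf_subsemigroup S add ((\<lambda>x. uf_plus S add x e) ` X)"
  unfolding uf_subsemigroup_def
proof (intro ballI)
  fix p q assume "p \<in> (\<lambda>x. uf_plus S add x e) ` X" "q \<in> (\<lambda>x. uf_plus S add x e) ` X"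
  then obtain x' where "p \<in> X" "x' \<in> X" "q = uf_plus S add x' e"
    using X(1) \<open>e \<in> X\<close> unfolding uf_subsemigroup_def by blast
  moreover have "uf_plus S add p (uf_plus S add x' e) = uf_plus S add (uf_plus S add p x') e"
    using uf_plus_assoc[OF ps] \<open>x' \<in> X\<close> X(2) by blast
  ultimately show "uf_plus S add p q \<in> (\<lambda>x. uf_plus S add x e) ` X"
    using X(1) unfolding uf_subsemigroup_def by auto
qed

lemma uf_subsemigroup_left_identities:
  assumes ps: "partial_semigroup S add" and X: "uf_subsemigroup S add X" "X \<subseteq> deltaS S add"
  shows "uf_subsemigroup S add {x \<in> X. uf_plus S add x e = e}"
  using X uf_plus_assoc[OF ps] unfolding uf_subsemigroup_def by (simp add: subset_iff)

theorem ex_idempotent_deltaS: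
  assumes ps: "partial_semigroup S add" and "adequate S add" "S \<noteq> {}"
  shows "\<exists>e\<in>deltaS S add. uf_plus S add e e = e"
proof -
  obtain X where X: "X \<noteq> {}" "closed_in_deltaS S add X" "uf_subsemigroup S add X"
    and minimal: "\<And>Y. Y \<noteq> {} \<Longrightarrow> Y \<subseteq> X \<Longrightarrow> closed_in_deltaS S add Y \<Longrightarrow>
                    uf_subsemigroup S add Y \<Longrightarrow> Y = X"
    using ex_minimal_closed_uf_subsemigroup[OF assms] by blast
  have Xd: "X \<subseteq> deltaS S add" using X(2) unfolding closed_in_deltaS_def by blast
  obtain e where "e \<in> X" using X(1) by blast
  then have e: "e \<in> deltaS S add" using Xd by blast
  have "(\<lambda>x. uf_plus S add x e) ` X \<subseteq> X" using X(3) \<open>e \<in> X\<close> unfolding uf_subsemigroup_def by blast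
  then have "(\<lambda>x. uf_plus S add x e) ` X = X"
    using minimal[OF _ _ closed_in_deltaS_right_translate[OF ps e X(1,2)]
        uf_subsemigroup_right_translate[OF ps X(3) Xd \<open>e \<in> X\<close>]] X(1)
    by blast
  then obtain x where "x \<in> X" "uf_plus S add x e = e" using \<open>e \<in> X\<close> by (metis imageE)
  then have ne: "{x \<in> X. uf_plus S add x e = e} \<noteq> {}" by blast
  have "{x \<in> X. uf_plus S add x e = e} = X"
    using minimal[OF ne _ closed_in_deltaS_left_identities[OF ps e X(2) ne]
        uf_subsemigroup_left_identities[OF ps X(3) Xd]] by blast
  then show ?thesis using \<open>e \<in> X\<close> e by blast
qed

section \<open>Images of idempotents under homomorphisms\<close>

definition uf_image :: "'b set \<Rightarrow> ('b \<Rightarrow> 'a) \<Rightarrow> 'a set \<Rightarrow> 'b set set \<Rightarrow> 'a set set" where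
  "uf_image D f T p = {A. A \<subseteq> T \<and> {d \<in> D. f d \<in> A} \<in> p}"

definition partial_hom ::
  "'b set \<Rightarrow> ('b \<Rightarrow> 'b \<Rightarrow> 'b option) \<Rightarrow> ('a \<Rightarrow> 'a \<Rightarrow> 'a option) \<Rightarrow> ('b \<Rightarrow> 'a) \<Rightarrow> bool" where
  "partial_hom D addD addT f \<longleftrightarrow>
     (\<forall>a\<in>D. \<forall>b\<in>D. \<forall>c. addD a b = Some c \<longrightarrow> addT (f a) (f b) = Some (f c))"

lemma ultrafilter_on_uf_image:
  assumes up: "ultrafilter_on D p" and f: "f ` D \<subseteq> T"
  shows "ultrafilter_on T (uf_image D f T p)"
  unfolding ultrafilter_on_def
proof (intro conjI ballI allI impI)
  show "uf_image D f T p \<subseteq> Pow T" unfolding uf_image_def by blast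
  have "{d \<in> D. f d \<in> T} = D" using f by blast
  then show "T \<in> uf_image D f T p" unfolding uf_image_def using ultrafilter_on_carrier[OF up] by simp
  show "{} \<notin> uf_image D f T p" unfolding uf_image_def using ultrafilter_on_nonempty[OF up] by auto
next
  fix A B assume "A \<in> uf_image D f T p" "B \<in> uf_image D f T p"
  moreover have "{d \<in> D. f d \<in> A \<inter> B} = {d \<in> D. f d \<in> A} \<inter> {d \<in> D. f d \<in> B}" by blast
  ultimately show "A \<inter> B \<in> uf_image D f T p"
    unfolding uf_image_def using ultrafilter_on_Int[OF up] by auto
next
  fix A B assume A: "A \<in> uf_image D f T p" and AB: "A \<subseteq> B \<and> B \<subseteq> T"
  then have "{d \<in> D. f d \<in> A} \<subseteq> {d \<in> D. f d \<in> B}" by blast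
  then show "B \<in> uf_image D f T p"
    using A AB ultrafilter_on_mono[OF up, of "{d \<in> D. f d \<in> A}" "{d \<in> D. f d \<in> B}"]
    unfolding uf_image_def by blast
next
  fix A assume "A \<subseteq> T"
  have "{d \<in> D. f d \<in> T - A} = D - {d \<in> D. f d \<in> A}" using f by blast
  then show "A \<in> uf_image D f T p \<or> T - A \<in> uf_image D f T p"
    unfolding uf_image_def using \<open>A \<subseteq> T\<close> ultrafilter_on_Diff_iff[OF up, of "{d \<in> D. f d \<in> A}"]
    by auto
qed

lemma uf_image_in_deltaS:
  assumes p: "p \<in> deltaS D addD" and f: "f ` D \<subseteq> T"
    and phi_pre: "\<And>x. x \<in> T \<Longrightarrow> {d \<in> D. f d \<in> phi T addT x} \<in> p"
  shows "uf_image D f T p \<in> deltaS T addT"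
  using ultrafilter_on_uf_image[OF deltaS_ultrafilter_on[OF p] f] phi_pre
  unfolding deltaS_def uf_image_def phi_def by auto

lemma uf_image_uf_plus:
  assumes psD: "partial_semigroup D addD" and hom: "partial_hom D addD addT f" and f: "f ` D \<subseteq> T"
    and p: "p \<in> deltaS D addD" and q: "q \<in> deltaS D addD"
  shows "uf_plus T addT (uf_image D f T p) (uf_image D f T q) = uf_image D f T (uf_plus D addD p q)"
proof -
  note uq = deltaS_ultrafilter_on[OF q]
  define pre where "pre A = {d \<in> D. f d \<in> A}" for A
  have pre_subset: "pre A \<subseteq> D" for A unfolding pre_def by blast
  have image_iff: "A \<in> uf_image D f T r \<longleftrightarrow> A \<subseteq> T \<and> pre A \<in> r" for A r
    unfolding uf_image_def pre_def by simp
  have pre_shift: "pre (minus_shift_in T addT (uf_image D f T q) A) = minus_shift_in D addD q (pre A)"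
    for A
  proof (intro set_eqI iffI)
    fix a assume "a \<in> pre (minus_shift_in T addT (uf_image D f T q) A)"
    then have a: "a \<in> D" "pre (minus_shift T addT (f a) A) \<in> q"
      unfolding pre_def minus_shift_in_def image_iff by auto
    have "pre (minus_shift T addT (f a) A) \<inter> phi D addD a \<subseteq> minus_shift D addD a (pre A)"
      using hom a(1) partial_semigroup_closed[OF psD a(1)] f
      by (force simp: pre_def phi_def minus_shift_iff partial_hom_def)
    then have "minus_shift D addD a (pre A) \<in> q"
      using ultrafilter_on_Int[OF uq a(2) deltaS_phi[OF q a(1)]]
        ultrafilter_on_mono[OF uq _ _ minus_shift_subset] by blast
    then show "a \<in> minus_shift_in D addD q (pre A)" unfolding minus_shift_in_def using a(1) by blast
  next
    fix a assume "a \<in> minus_shift_in D addD q (pre A)"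
    then have a: "a \<in> D" "minus_shift D addD a (pre A) \<in> q" unfolding minus_shift_in_def by auto
    have "minus_shift D addD a (pre A) \<subseteq> pre (minus_shift T addT (f a) A)"
      using hom a(1) partial_semigroup_closed[OF psD a(1)] f
      by (force simp: pre_def minus_shift_iff partial_hom_def)
    then have "pre (minus_shift T addT (f a) A) \<in> q"
      using ultrafilter_on_mono[OF uq a(2) _ pre_subset] by blast
    then show "a \<in> pre (minus_shift_in T addT (uf_image D f T q) A)"
      unfolding pre_def minus_shift_in_def image_iff using a(1) f minus_shift_subset[of T addT "f a" A]
      by auto
  qed
  show ?thesis
  proof (intro set_eqI)
    fix A
    have "minus_shift_in T addT (uf_image D f T q) A \<subseteq> T" "pre A \<subseteq> D"
      by (rule minus_shift_in_subset, rule pre_subset)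
    then show "A \<in> uf_plus T addT (uf_image D f T p) (uf_image D f T q) \<longleftrightarrow>
               A \<in> uf_image D f T (uf_plus D addD p q)"
      unfolding uf_plus_iff image_iff pre_shift by blast
  qed
qed

lemma IP_star_preimage_mem:
  assumes C: "IP_star T addT C"
    and psD: "partial_semigroup D addD" and hom: "partial_hom D addD addT f" and f: "f ` D \<subseteq> T"
    and p: "p \<in> deltaS D addD" "uf_plus D addD p p = p"
    and phi_pre: "\<And>x. x \<in> T \<Longrightarrow> {d \<in> D. f d \<in> phi T addT x} \<in> p"
  shows "{d \<in> D. f d \<in> C} \<in> p"
proof -
  let ?q = "uf_image D f T p"
  have "?q \<in> deltaS T addT" by (rule uf_image_in_deltaS[OF p(1) f phi_pre])
  moreover have "uf_plus T addT ?q ?q = ?q" using uf_image_uf_plus[OF psD hom f p(1) p(1)] p(2) by simp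
  ultimately have "C \<in> ?q" using C unfolding IP_star_def by blast
  then show ?thesis unfolding uf_image_def by blast
qed

section \<open>Finite sets under disjoint union\<close>

definition fin_sets :: "nat set set" where
  "fin_sets = {F. finite F \<and> F \<noteq> {}}"

definition disjoint_union :: "nat set \<Rightarrow> nat set \<Rightarrow> nat set option" where
  "disjoint_union A B = (if A \<inter> B = {} then Some (A \<union> B) else None)"

lemma partial_semigroup_fin_sets: "partial_semigroup fin_sets disjoint_union"
  unfolding partial_semigroup_def
proof (intro conjI ballI allI impI)
  fix a b c assume "a \<in> fin_sets" "b \<in> fin_sets" "disjoint_union a b = Some c"
  then show "c \<in> fin_sets" unfolding fin_sets_def disjoint_union_def by (auto split: if_splits)
next
  fix a b c :: "nat set"
  show "Option.bind (disjoint_union a b) (\<lambda>d. disjoint_union d c) =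
        Option.bind (disjoint_union b c) (disjoint_union a)"
  proof (cases "a \<inter> b = {} \<and> b \<inter> c = {} \<and> a \<inter> c = {}")
    case True
    then show ?thesis unfolding disjoint_union_def by (auto simp: Un_assoc Int_Un_distrib Int_Un_distrib2)
  next
    case False
    then show ?thesis unfolding disjoint_union_def by (auto simp: Int_Un_distrib Int_Un_distrib2)
  qed
qed

lemma phi_fin_sets_lessThan:
  "M > 0 \<Longrightarrow> phi fin_sets disjoint_union {..<M} = {F \<in> fin_sets. F \<inter> {..<M} = {}}"
  unfolding phi_def disjoint_union_def by auto

lemma adequate_fin_sets: "adequate fin_sets disjoint_union"
  unfolding adequate_def
proof (intro allI impI)
  fix H assume H: "finite H \<and> H \<noteq> {} \<and> H \<subseteq> fin_sets"
  define M where "M = Suc (Max (\<Union>H))"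
  have "finite (\<Union>H)" using H unfolding fin_sets_def by auto
  then have "s \<inter> {M} = {}" if "s \<in> H" for s
    using that Max_ge[OF \<open>finite (\<Union>H)\<close>, of M] unfolding M_def by fastforce
  then have "{M} \<in> sigma fin_sets disjoint_union H"
    unfolding sigma_def phi_def fin_sets_def disjoint_union_def by auto
  then show "sigma fin_sets disjoint_union H \<noteq> {}" by blast
qed

lemma ex_idempotent_deltaS_fin_sets:
  "\<exists>p\<in>deltaS fin_sets disjoint_union. uf_plus fin_sets disjoint_union p p = p"
proof (rule ex_idempotent_deltaS[OF partial_semigroup_fin_sets adequate_fin_sets])
  have "{0} \<in> fin_sets" unfolding fin_sets_def by simp
  then show "fin_sets \<noteq> {}" by blast
qed

lemma deltaS_fin_sets_tail:
  assumes "p \<in> deltaS fin_sets disjoint_union"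
  shows "{F \<in> fin_sets. F \<inter> {..<M} = {}} \<in> p"
proof (cases "M = 0")
  case True
  then show ?thesis using ultrafilter_on_carrier[OF deltaS_ultrafilter_on[OF assms]] by simp
next
  case False
  then have "{..<M} \<in> fin_sets" unfolding fin_sets_def by auto
  then have "phi fin_sets disjoint_union {..<M} \<in> p" by (rule deltaS_phi[OF assms])
  then show ?thesis using phi_fin_sets_lessThan[of M] False by simp
qed

section \<open>Blocks\<close>

definition blocks :: "nat \<Rightarrow> nat set \<Rightarrow> nat set \<Rightarrow> nat set" where
  "blocks m \<Gamma> F = (\<lambda>(t, n). t * m + n) ` (\<Gamma> \<times> F)"

lemma finite_blocks: "finite \<Gamma> \<Longrightarrow> finite F \<Longrightarrow> finite (blocks m \<Gamma> F)"
  unfolding blocks_def by simp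

lemma blocks_empty_iff: "blocks m \<Gamma> F = {} \<longleftrightarrow> \<Gamma> = {} \<or> F = {}"
  unfolding blocks_def by auto

lemma blocks_Un_left: "blocks m (\<Gamma> \<union> \<Gamma>') F = blocks m \<Gamma> F \<union> blocks m \<Gamma>' F"
  unfolding blocks_def by (simp add: Sigma_Un_distrib1 image_Un)

lemma blocks_UN_right: "blocks m \<Gamma> F = (\<Union>n\<in>F. blocks m \<Gamma> {n})"
  unfolding blocks_def by auto

lemma inj_on_block_index: "inj_on (\<lambda>(t, n). t * m + n) (UNIV \<times> {..<m::nat})"
proof (rule inj_onI, clarify)
  fix t n t' n' assume "n < m" "n' < m" "t * m + n = t' * m + n'"
  then show "t = t' \<and> n = n'"
    by (metis add.commute div_mult_self1 div_less less_nat_zero_code mod_mult_self1 mod_less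
        plus_nat.add_0)
qed

lemma blocks_Int:
  assumes "F \<subseteq> {..<m}" "F' \<subseteq> {..<m}"
  shows "blocks m \<Gamma> F \<inter> blocks m \<Gamma>' F' = blocks m (\<Gamma> \<inter> \<Gamma>') (F \<inter> F')"
proof -
  have "\<Gamma> \<times> F \<subseteq> UNIV \<times> {..<m}" "\<Gamma>' \<times> F' \<subseteq> UNIV \<times> {..<m}" using assms by auto
  from inj_on_image_Int[OF inj_on_block_index this] show ?thesis
    unfolding blocks_def by (simp add: Times_Int_Times)
qed

lemma blocks_subset_atLeast:
  assumes "m \<ge> 1" "\<Gamma> \<inter> {..<M} = {}"
  shows "blocks m \<Gamma> F \<subseteq> {M..}"
proof
  fix k assume "k \<in> blocks m \<Gamma> F"
  then obtain t n where "t \<in> \<Gamma>" "k = t * m + n" unfolding blocks_def by auto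
  moreover have "M \<le> t" using \<open>t \<in> \<Gamma>\<close> assms(2) by auto
  moreover have "t \<le> t * m" using assms(1) by simp
  ultimately have "M \<le> k" by linarith
  then show "k \<in> {M..}" by simp
qed

lemma blocks_disjoint_left:
  "\<Gamma> \<inter> \<Gamma>' = {} \<Longrightarrow> F \<subseteq> {..<m} \<Longrightarrow> blocks m \<Gamma> F \<inter> blocks m \<Gamma>' F = {}"
  using blocks_Int[of F m F \<Gamma> \<Gamma>'] by (simp add: blocks_def)

lemma blocks_singletons_disjoint:
  "n < m \<Longrightarrow> n' < m \<Longrightarrow> n \<noteq> n' \<Longrightarrow> blocks m \<Gamma> {n} \<inter> blocks m \<Gamma>' {n'} = {}"
  using blocks_Int[of "{n}" m "{n'}" \<Gamma> \<Gamma>'] by (simp add: blocks_def)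

section \<open>Product subsystems\<close>

locale adequate_sequences =
  fixes l m :: nat and S :: "nat \<Rightarrow> 'a set" and add :: "nat \<Rightarrow> 'a \<Rightarrow> 'a \<Rightarrow> 'a option"
    and y :: "nat \<Rightarrow> nat \<Rightarrow> 'a"
  assumes m_pos: "m \<ge> 1"
    and comm: "\<And>i. i < l \<Longrightarrow> comm_partial_semigroup (S i) (add i)"
    and seq: "\<And>i. i < l \<Longrightarrow> adequate_seq (S i) (add i) (y i)"
begin

abbreviation T :: "(nat \<Rightarrow> 'a) set" where
  "T \<equiv> prod_carrier {..<l} S"

abbreviation addT :: "(nat \<Rightarrow> 'a) \<Rightarrow> (nat \<Rightarrow> 'a) \<Rightarrow> (nat \<Rightarrow> 'a) option" where
  "addT \<equiv> prod_add {..<l} add"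

lemma y_closed: "i < l \<Longrightarrow> \<forall>n. y i n \<in> S i"
  using seq unfolding adequate_seq_def by blast

lemma psum_y_defined: "i < l \<Longrightarrow> finite K \<Longrightarrow> K \<noteq> {} \<Longrightarrow> \<exists>z. psum (add i) (y i) K = Some z"
  using seq unfolding adequate_seq_def by blast

lemma eventually_psum_y_in_phi:
  assumes "i < l" "h \<in> S i"
  shows "\<forall>\<^sub>F M in sequentially. \<forall>K. finite K \<and> K \<noteq> {} \<and> K \<subseteq> {M..} \<longrightarrow>
           (\<exists>z\<in>phi (S i) (add i) h. psum (add i) (y i) K = Some z)"
proof -
  have tails: "\<forall>H. finite H \<and> H \<noteq> {} \<and> H \<subseteq> S i \<longrightarrow> (\<exists>M. \<forall>K. finite K \<and> K \<noteq> {} \<and> K \<subseteq> {M..} \<longrightarrow>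
      (\<exists>z. psum (add i) (y i) K = Some z \<and> z \<in> sigma (S i) (add i) H))"
    using seq[OF assms(1)] unfolding adequate_seq_def by (elim conjE) assumption
  obtain M0 where M0: "\<forall>K. finite K \<and> K \<noteq> {} \<and> K \<subseteq> {M0..} \<longrightarrow>
      (\<exists>z. psum (add i) (y i) K = Some z \<and> z \<in> sigma (S i) (add i) {h})"
    using tails[rule_format, of "{h}"] assms(2) by auto
  show ?thesis
    unfolding eventually_sequentially
  proof (intro exI allI impI)
    fix M K assume "M0 \<le> M" "finite K \<and> K \<noteq> {} \<and> K \<subseteq> {M..}"
    then have "finite K \<and> K \<noteq> {} \<and> K \<subseteq> {M0..}" by auto
    then show "\<exists>z\<in>phi (S i) (add i) h. psum (add i) (y i) K = Some z"
      using M0 unfolding sigma_def by auto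
  qed
qed

definition block_sum :: "nat \<Rightarrow> nat set \<Rightarrow> nat set \<Rightarrow> 'a" where
  "block_sum i \<Gamma> F = the (psum (add i) (y i) (blocks m \<Gamma> F))"

lemma psum_blocks:
  assumes "i < l" "\<Gamma> \<in> fin_sets" "finite F" "F \<noteq> {}"
  shows "psum (add i) (y i) (blocks m \<Gamma> F) = Some (block_sum i \<Gamma> F)"
  using psum_y_defined[OF assms(1), of "blocks m \<Gamma> F"] assms(2-4)
  unfolding block_sum_def fin_sets_def by (auto simp: finite_blocks blocks_empty_iff)

lemma block_sum_closed: "i < l \<Longrightarrow> \<Gamma> \<in> fin_sets \<Longrightarrow> finite F \<Longrightarrow> F \<noteq> {} \<Longrightarrow> block_sum i \<Gamma> F \<in> S i"
  using psum_closed[OF comm_partial_semigroupD(1)[OF comm] y_closed psum_blocks] by blast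

definition patterns :: "(nat \<Rightarrow> nat set) set" where
  "patterns = PiE {..<l} (\<lambda>_. {F. F \<noteq> {} \<and> F \<subseteq> {..<m}})"

definition pattern_sum :: "(nat \<Rightarrow> nat set) \<Rightarrow> nat set \<Rightarrow> nat \<Rightarrow> 'a" where
  "pattern_sum P \<Gamma> = restrict (\<lambda>i. block_sum i \<Gamma> (P i)) {..<l}"

lemma patternsD:
  assumes "P \<in> patterns" "i < l"
  shows "P i \<noteq> {}" "P i \<subseteq> {..<m}" "finite (P i)"
  using assms finite_subset[of "P i" "{..<m}"] unfolding patterns_def by auto

lemma pattern_sum_in_T: "P \<in> patterns \<Longrightarrow> \<Gamma> \<in> fin_sets \<Longrightarrow> pattern_sum P \<Gamma> \<in> T"
  unfolding prod_carrier_def pattern_sum_def using block_sum_closed patternsD by auto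

lemma partial_hom_pattern_sum:
  assumes P: "P \<in> patterns"
  shows "partial_hom fin_sets disjoint_union addT (pattern_sum P)"
  unfolding partial_hom_def
proof (intro ballI allI impI)
  fix \<Gamma> \<Gamma>' \<Delta> assume \<Gamma>: "\<Gamma> \<in> fin_sets" "\<Gamma>' \<in> fin_sets" and "disjoint_union \<Gamma> \<Gamma>' = Some \<Delta>"
  then have disj: "\<Gamma> \<inter> \<Gamma>' = {}" and \<Delta>: "\<Delta> = \<Gamma> \<union> \<Gamma>'"
    unfolding disjoint_union_def by (auto split: if_splits)
  then have "\<Delta> \<in> fin_sets" using \<Gamma> unfolding fin_sets_def by auto
  have "add i (block_sum i \<Gamma> (P i)) (block_sum i \<Gamma>' (P i)) = Some (block_sum i \<Delta> (P i))"
    if i: "i < l" for i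
  proof -
    note Pi = patternsD[OF P i]
    have "blocks m \<Gamma> (P i) \<inter> blocks m \<Gamma>' (P i) = {}" by (rule blocks_disjoint_left[OF disj Pi(2)])
    then have "psum (add i) (y i) (blocks m \<Delta> (P i)) =
          opt_add (add i) (psum (add i) (y i) (blocks m \<Gamma> (P i))) (psum (add i) (y i) (blocks m \<Gamma>' (P i)))"
      unfolding \<Delta> blocks_Un_left using \<Gamma> Pi
      by (intro psum_Un[OF comm[OF i] y_closed[OF i]])
        (auto simp: fin_sets_def finite_blocks blocks_empty_iff)
    then show ?thesis
      using psum_blocks[OF i _ Pi(3,1)] \<Gamma> \<open>\<Delta> \<in> fin_sets\<close>
      by (simp add: opt_add_def)
  qed
  then show "addT (pattern_sum P \<Gamma>) (pattern_sum P \<Gamma>') = Some (pattern_sum P \<Delta>)"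
    unfolding prod_add_def pattern_sum_def by (auto simp: restrict_def)
qed

lemma pattern_sum_preimage_phi:
  assumes P: "P \<in> patterns" and p: "p \<in> deltaS fin_sets disjoint_union" and x: "x \<in> T"
  shows "{\<Gamma> \<in> fin_sets. pattern_sum P \<Gamma> \<in> phi T addT x} \<in> p"
proof -
  have "\<forall>\<^sub>F M in sequentially. \<forall>i\<in>{..<l}. \<forall>K. finite K \<and> K \<noteq> {} \<and> K \<subseteq> {M..} \<longrightarrow>
          (\<exists>z\<in>phi (S i) (add i) (x i). psum (add i) (y i) K = Some z)"
    using x eventually_psum_y_in_phi unfolding prod_carrier_def
    by (intro eventually_ball_finite) auto
  then obtain M where M: "\<And>i K. i < l \<Longrightarrow> finite K \<Longrightarrow> K \<noteq> {} \<Longrightarrow> K \<subseteq> {M..} \<Longrightarrow>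
      \<exists>z\<in>phi (S i) (add i) (x i). psum (add i) (y i) K = Some z"
    unfolding eventually_sequentially by (meson lessThan_iff order_refl)
  have "{\<Gamma> \<in> fin_sets. \<Gamma> \<inter> {..<M} = {}} \<subseteq> {\<Gamma> \<in> fin_sets. pattern_sum P \<Gamma> \<in> phi T addT x}"
  proof (intro subsetI CollectI conjI)
    fix \<Gamma> assume "\<Gamma> \<in> {\<Gamma> \<in> fin_sets. \<Gamma> \<inter> {..<M} = {}}"
    then have \<Gamma>: "\<Gamma> \<in> fin_sets" "\<Gamma> \<inter> {..<M} = {}" by auto
    then show "\<Gamma> \<in> fin_sets" by blast
    have "add i (x i) (pattern_sum P \<Gamma> i) \<noteq> None" if i: "i < l" for i
    proof -
      note Pi = patternsD[OF P i]
      have "finite (blocks m \<Gamma> (P i))" "blocks m \<Gamma> (P i) \<noteq> {}"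
        using \<Gamma>(1) Pi unfolding fin_sets_def by (auto simp: finite_blocks blocks_empty_iff)
      then obtain z where "z \<in> phi (S i) (add i) (x i)" "psum (add i) (y i) (blocks m \<Gamma> (P i)) = Some z"
        using M[OF i _ _ blocks_subset_atLeast[OF m_pos \<Gamma>(2)]] by blast
      then show ?thesis
        using psum_blocks[OF i \<Gamma>(1) Pi(3,1)] i unfolding pattern_sum_def phi_def by auto
    qed
    then show "pattern_sum P \<Gamma> \<in> phi T addT x"
      using pattern_sum_in_T[OF P \<Gamma>(1)] unfolding phi_def prod_add_def by auto
  qed
  then show ?thesis
    using ultrafilter_on_mono[OF deltaS_ultrafilter_on[OF p] deltaS_fin_sets_tail[OF p]] by blast
qed

lemma ex_fin_set_all_pattern_sums_in:
  assumes C: "IP_star T addT C"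
  shows "\<exists>\<Gamma>\<in>fin_sets. \<forall>P\<in>patterns. pattern_sum P \<Gamma> \<in> C"
proof -
  obtain p where p: "p \<in> deltaS fin_sets disjoint_union" "uf_plus fin_sets disjoint_union p p = p"
    using ex_idempotent_deltaS_fin_sets by blast
  note up = deltaS_ultrafilter_on[OF p(1)]
  have "{\<Gamma> \<in> fin_sets. pattern_sum P \<Gamma> \<in> C} \<in> p" if P: "P \<in> patterns" for P
    using IP_star_preimage_mem[OF C partial_semigroup_fin_sets partial_hom_pattern_sum[OF P] _ p
        pattern_sum_preimage_phi[OF P p(1)]] pattern_sum_in_T[OF P] by blast
  moreover have "finite patterns" unfolding patterns_def by (rule finite_PiE) auto
  ultimately have "fin_sets \<inter> \<Inter>((\<lambda>P. {\<Gamma> \<in> fin_sets. pattern_sum P \<Gamma> \<in> C}) ` patterns) \<in> p"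
    by (intro ultrafilter_on_Inter[OF up]) auto
  then obtain \<Gamma> where "\<Gamma> \<in> fin_sets \<inter> \<Inter>((\<lambda>P. {\<Gamma> \<in> fin_sets. pattern_sum P \<Gamma> \<in> C}) ` patterns)"
    using ultrafilter_on_nonempty[OF up] by blast
  then show ?thesis by blast
qed

lemma weak_product_subsystem_block_sums:
  assumes "i < l" "\<Gamma> \<in> fin_sets"
  shows "weak_product_subsystem (add i) (y i) m (\<lambda>n. block_sum i \<Gamma> {n})"
  unfolding weak_product_subsystem_def
proof (intro exI conjI allI impI)
  fix n assume "n < m"
  show "finite (blocks m \<Gamma> {n})" "blocks m \<Gamma> {n} \<noteq> {}"
    using assms(2) unfolding fin_sets_def by (auto simp: finite_blocks blocks_empty_iff)
  show "psum (add i) (y i) (blocks m \<Gamma> {n}) = Some (block_sum i \<Gamma> {n})"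
    using psum_blocks[OF assms] by simp
next
  fix n n' assume "n < m" "n' < m" "n \<noteq> n'"
  then show "blocks m \<Gamma> {n} \<inter> blocks m \<Gamma> {n'} = {}"
    by (rule blocks_singletons_disjoint)
qed

lemma psum_block_sums:
  assumes i: "i < l" and \<Gamma>: "\<Gamma> \<in> fin_sets" and F: "F \<noteq> {}" "F \<subseteq> {..<m}"
  shows "psum (add i) (\<lambda>n. block_sum i \<Gamma> {n}) F = Some (block_sum i \<Gamma> F)"
proof -
  have "finite F" using F(2) finite_subset[of F "{..<m}"] by blast
  have "psum (add i) (\<lambda>n. block_sum i \<Gamma> {n}) F = psum (add i) (y i) (\<Union>n\<in>F. blocks m \<Gamma> {n})"
  proof (rule psum_UN[OF comm[OF i] y_closed[OF i] _ \<open>finite F\<close> F(1)])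
    show "\<forall>n. block_sum i \<Gamma> {n} \<in> S i" using block_sum_closed[OF i \<Gamma>] by simp
    show "disjoint_family_on (\<lambda>n. blocks m \<Gamma> {n}) F"
      unfolding disjoint_family_on_def
    proof (intro ballI impI)
      fix n n' assume "n \<in> F" "n' \<in> F" "n \<noteq> n'"
      then show "blocks m \<Gamma> {n} \<inter> blocks m \<Gamma> {n'} = {}"
        using F(2) blocks_singletons_disjoint by blast
    qed
  qed (use \<Gamma> psum_blocks[OF i \<Gamma>] in \<open>auto simp: fin_sets_def finite_blocks blocks_empty_iff\<close>)
  then show ?thesis
    using psum_blocks[OF i \<Gamma> \<open>finite F\<close> F(1)] by (simp flip: blocks_UN_right)
qed

lemma FS_block_sums_subset:
  assumes \<Gamma>: "\<Gamma> \<in> fin_sets" and C: "\<forall>P\<in>patterns. pattern_sum P \<Gamma> \<in> C"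
  shows "PiE {..<l} (\<lambda>i. FS (add i) (\<lambda>n. block_sum i \<Gamma> {n}) m) \<subseteq> C"
proof
  fix f assume f: "f \<in> PiE {..<l} (\<lambda>i. FS (add i) (\<lambda>n. block_sum i \<Gamma> {n}) m)"
  have "\<exists>F. F \<noteq> {} \<and> F \<subseteq> {..<m} \<and> f i = block_sum i \<Gamma> F" if i: "i < l" for i
  proof -
    have "f i \<in> FS (add i) (\<lambda>n. block_sum i \<Gamma> {n}) m" using f i by auto
    then obtain F where F: "F \<noteq> {}" "F \<subseteq> {..<m}" "psum (add i) (\<lambda>n. block_sum i \<Gamma> {n}) F = Some (f i)"
      unfolding FS_def by blast
    moreover have "f i = block_sum i \<Gamma> F" using F(3) psum_block_sums[OF i \<Gamma> F(1,2)] by simp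
    ultimately show ?thesis by blast
  qed
  then obtain P where P: "\<And>i. i < l \<Longrightarrow> P i \<noteq> {} \<and> P i \<subseteq> {..<m} \<and> f i = block_sum i \<Gamma> (P i)"
    by metis
  have "restrict P {..<l} \<in> patterns" using P unfolding patterns_def by auto
  then have "pattern_sum (restrict P {..<l}) \<Gamma> \<in> C" using C by blast
  moreover have "pattern_sum (restrict P {..<l}) \<Gamma> = f"
  proof
    fix i
    show "pattern_sum (restrict P {..<l}) \<Gamma> i = f i"
      using P[of i] PiE_arb[OF f, of i] unfolding pattern_sum_def by auto
  qed
  ultimately show "f \<in> C" by simp
qed

end

theorem theorem11:
  fixes l m :: nat
    and S :: "nat \<Rightarrow> 'a set"
    and add :: "nat \<Rightarrow> 'a \<Rightarrow> 'a \<Rightarrow> 'a option"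
    and y :: "nat \<Rightarrow> nat \<Rightarrow> 'a"
    and C :: "(nat \<Rightarrow> 'a) set"
  assumes "l \<ge> 1" and "m \<ge> 1"
    and "\<forall>i<l. countable (S i) \<and> comm_partial_semigroup (S i) (add i) \<and> adequate (S i) (add i)"
    and "\<forall>i<l. adequate_seq (S i) (add i) (y i)"
    and "IP_star (prod_carrier {..<l} S) (prod_add {..<l} add) C"
  shows "\<exists>x :: nat \<Rightarrow> nat \<Rightarrow> 'a.
           (\<forall>i<l. weak_product_subsystem (add i) (y i) m (x i)) \<and>
           PiE {..<l} (\<lambda>i. FS (add i) (x i) m) \<subseteq> C"
proof -
  interpret adequate_sequences l m S add y
    using assms(2-4) by unfold_locales auto
  obtain \<Gamma> where "\<Gamma> \<in> fin_sets" "\<forall>P\<in>patterns. pattern_sum P \<Gamma> \<in> C"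
    using ex_fin_set_all_pattern_sums_in[OF assms(5)] by blast
  then show ?thesis
    using weak_product_subsystem_block_sums FS_block_sums_subset
    by (intro exI[of _ "\<lambda>i n. block_sum i \<Gamma> {n}"]) blast
qed

end
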